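(* Let $a$ be an automatic sequence and $\alpha$ a letter such that the density of $\{n: a(n)=\alpha\}$ exists and equals $0$. Then the upper Banach density of $\{n:a(n)=\alpha\}$, namely $\limsup_{N-M\to\infty}\frac{\#\{M\le n\le N: a(n)=\alpha\}}{N-M+1}$, is also $0$.
   Context: A sequence $a$ on a finite alphabet is automatic if for some $k\ge2$ there is a finite set of states $Q$, a transition map $\delta:Q\times\{0,\dots,k-1\}\to Q$ extended to words letter by letter, an initial state $q_0$ and an output map $\tau$ with $a(n)=\tau(\delta(q_0,(n)_k))$, $(n)_k$ being the base-$k$ expansion of $n$ (most significant digit first). *)

theory Defs
  imports Complex_Main
begin

fun digits_lsd :: "nat \<Rightarrow> nat \<Rightarrow> nat list" where
  "digits_lsd k n = (if k < 2 \<or> n = 0 then [] else n mod k # digits_lsd k (n div k))"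

definition base_expansion :: "nat \<Rightarrow> nat \<Rightarrow> nat list" where
  "base_expansion k n = rev (digits_lsd k n)"

definition delta_star :: "('q \<Rightarrow> nat \<Rightarrow> 'q) \<Rightarrow> 'q \<Rightarrow> nat list \<Rightarrow> 'q" where
  "delta_star \<delta> q w = foldl \<delta> q w"

text \<open>Automatic sequences. States are taken from a finite set of naturals
 (any finite state set can be relabelled this way).\<close>
definition automatic :: "(nat \<Rightarrow> 'b) \<Rightarrow> bool" where
  "automatic a \<longleftrightarrow> finite (range a) \<and>
     (\<exists>k::nat. k \<ge> 2 \<and> (\<exists>(Q::nat set) \<delta> q0 (\<tau>::nat \<Rightarrow> 'b).
        finite Q \<and> q0 \<in> Q \<and> (\<forall>q\<in>Q. \<forall>d<k. \<delta> q d \<in> Q) \<and>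
        (\<forall>n. a n = \<tau> (delta_star \<delta> q0 (base_expansion k n)))))"

definition has_density :: "nat set \<Rightarrow> real \<Rightarrow> bool" where
  "has_density S d \<longleftrightarrow>
     ((\<lambda>N. real (card (S \<inter> {..<N})) / real N) \<longlonglongrightarrow> d)"

definition upper_banach_density :: "nat set \<Rightarrow> real" where
  "upper_banach_density S =
     (INF L::nat. SUP p \<in> {(M, N). M + L \<le> N}.
        real (card (S \<inter> {fst p..snd p})) / real (snd p - fst p + 1))"

end

theory Submission
  imports Defs
begin

text \<open>After the digits of \<open>u \<ge> 1\<close>, an automaton reading \<open>u k\<^sup>j + m\<close> with \<open>m < k\<^sup>j\<close>
 reads the \<open>j\<close> digits of \<open>m\<close>, leading zeros included. So the positions of \<open>\<alpha>\<close> in the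
 block \<open>[u k\<^sup>j, (u+1) k\<^sup>j)\<close> depend only on \<open>j\<close> and on the state reached on \<open>(u)\<^sub>k\<close>.
 That block lies in \<open>[0, (u+1) k\<^sup>j)\<close>, so by density zero its frequency of \<open>\<alpha>\<close> tends to \<open>0\<close>
 as \<open>j \<rightarrow> \<infinity>\<close>; as there are finitely many states, one \<open>j\<close> makes this frequency less than \<open>\<epsilon>\<close>
 in all blocks with \<open>u \<ge> 1\<close> at once. An interval of length \<open>N\<close> is covered by \<open>N/k\<^sup>j + 2\<close> such
 blocks and the block \<open>u = 0\<close>, so its frequency of \<open>\<alpha>\<close> is at most \<open>\<epsilon> + O(k\<^sup>j/N)\<close>.\<close>

declare digits_lsd.simps[simp del]

fun padded_digits :: "nat \<Rightarrow> nat \<Rightarrow> nat \<Rightarrow> nat list" where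
  "padded_digits k 0 m = []"
| "padded_digits k (Suc j) m = m mod k # padded_digits k j (m div k)"

lemma digits_lsd_less: "d \<in> set (digits_lsd k n) \<Longrightarrow> d < k"
proof (induction k n rule: digits_lsd.induct)
  case (1 k n)
  then show ?case
    by (cases "k < 2 \<or> n = 0") (auto simp: digits_lsd.simps[of k n])
qed

lemma digits_lsd_shift:
  assumes "k \<ge> 2" and "u \<ge> 1" and "m < k ^ j"
  shows "digits_lsd k (u * k ^ j + m) = padded_digits k j m @ digits_lsd k u"
  using assms(3)
proof (induction j arbitrary: m)
  case 0
  then show ?case by simp
next
  case (Suc j)
  let ?n = "u * k ^ Suc j + m"
  have n_eq: "?n = (u * k ^ j + m div k) * k + m mod k"
    by (simp add: algebra_simps)
  then have "?n mod k = m mod k" and "?n div k = u * k ^ j + m div k"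
    using assms(1) by simp_all
  moreover have "m div k < k ^ j"
    using Suc.prems assms(1) by (simp add: div_less_iff_less_mult mult.commute)
  moreover have "?n \<noteq> 0"
    using assms(1,2) by simp
  ultimately show ?case
    using assms(1) Suc.IH by (subst digits_lsd.simps) simp
qed

lemma foldl_closed:
  assumes "q \<in> Q" and "\<forall>q\<in>Q. \<forall>d<k. \<delta> q d \<in> Q" and "\<forall>d\<in>set w. d < k"
  shows "foldl \<delta> q w \<in> Q"
  using assms by (induction w arbitrary: q) auto

lemma automatic_block_determined_by_state:
  assumes "automatic a"
  obtains k and s :: "nat \<Rightarrow> nat" where "k \<ge> 2" and "finite (range s)"
    and "\<And>u v j m. 0 < u \<Longrightarrow> 0 < v \<Longrightarrow> s u = s v \<Longrightarrow> m < k ^ j \<Longrightarrow>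
           a (u * k ^ j + m) = a (v * k ^ j + m)"
proof -
  from assms obtain k Q \<delta> q0 \<tau> where k: "k \<ge> 2" and "finite (Q :: nat set)" and "q0 \<in> Q"
    and closed: "\<forall>q\<in>Q. \<forall>d<k. \<delta> q d \<in> Q"
    and a_eq: "\<And>n. a n = \<tau> (delta_star \<delta> q0 (base_expansion k n))"
    unfolding automatic_def by blast
  define s where "s u = delta_star \<delta> q0 (base_expansion k u)" for u
  have "s u \<in> Q" for u
    unfolding s_def delta_star_def base_expansion_def
    using \<open>q0 \<in> Q\<close> closed by (rule foldl_closed) (simp add: digits_lsd_less)
  then have "range s \<subseteq> Q"
    by blast
  then have "finite (range s)"
    using \<open>finite Q\<close> finite_subset by blast
  moreover have "a (u * k ^ j + m) = \<tau> (foldl \<delta> (s u) (rev (padded_digits k j m)))"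
    if "0 < u" "m < k ^ j" for u j m
    using that k by (simp add: a_eq s_def delta_star_def base_expansion_def digits_lsd_shift)
  ultimately show thesis
    using that[OF k] by metis
qed

lemma card_Int_block:
  "card ((S :: nat set) \<inter> {u * K..<u * K + K}) = card {m. m < K \<and> u * K + m \<in> S}"
proof -
  have "S \<inter> {u * K..<u * K + K} = (\<lambda>m. u * K + m) ` {m. m < K \<and> u * K + m \<in> S}"
  proof (intro equalityI subsetI)
    fix n assume "n \<in> S \<inter> {u * K..<u * K + K}"
    then show "n \<in> (\<lambda>m. u * K + m) ` {m. m < K \<and> u * K + m \<in> S}"
      by (auto simp: image_iff intro!: exI[of _ "n - u * K"])
  qed auto
  then show ?thesis
    by (simp add: card_image)
qed

lemma block_frequency_tendsto_0:
  assumes "has_density S 0"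
  shows "(\<lambda>K. real (card (S \<inter> {u * K..<u * K + K})) / real K) \<longlonglongrightarrow> 0"
proof -
  define D where "D K = real (card (S \<inter> {..<K})) / real K" for K
  have "(\<lambda>K. D ((u + 1) * K)) \<longlonglongrightarrow> 0"
    using filterlim_compose[OF assms[unfolded has_density_def] mult_nat_left_at_top[of "u + 1"]]
    by (simp add: D_def)
  then have upper_tendsto: "(\<lambda>K. real (u + 1) * D ((u + 1) * K)) \<longlonglongrightarrow> 0"
    by (rule tendsto_mult_right_zero)
  have upper: "real (card (S \<inter> {u * K..<u * K + K})) / real K \<le> real (u + 1) * D ((u + 1) * K)"
    for K
  proof -
    have "card (S \<inter> {u * K..<u * K + K}) \<le> card (S \<inter> {..<(u + 1) * K})"
      by (rule card_mono) auto
    then have "real (card (S \<inter> {u * K..<u * K + K})) / real K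
        \<le> real (card (S \<inter> {..<(u + 1) * K})) / real K"
      by (simp add: divide_right_mono)
    also have "\<dots> = real (u + 1) * D ((u + 1) * K)"
      unfolding D_def by (simp only: of_nat_mult) simp
    finally show ?thesis .
  qed
  show ?thesis
    by (rule real_tendsto_sandwich[OF _ _ tendsto_const upper_tendsto])
       (simp_all only: upper of_nat_0_le_iff divide_nonneg_nonneg eventually_True)
qed

lemma interval_frequency_le_1: "real (card (S \<inter> {M..N})) / real (N - M + 1) \<le> 1"
proof -
  have "card (S \<inter> {M..N}) \<le> card {M..N}"
    by (rule card_mono) auto
  then show ?thesis
    by (simp add: divide_le_eq)
qed

lemma upper_banach_density_sup_nonneg:
  "0 \<le> (SUP p \<in> {(M, N). M + L \<le> N}. real (card (S \<inter> {fst p..snd p})) / real (snd p - fst p + 1))"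
proof -
  have "bdd_above ((\<lambda>p. real (card (S \<inter> {fst p..snd p})) / real (snd p - fst p + 1)) ` A)" for A
    using interval_frequency_le_1 by (intro bdd_aboveI) blast
  then show ?thesis
    by (rule cSUP_upper2[where x = "(0, L)"]) auto
qed

lemma upper_banach_density_nonneg: "0 \<le> upper_banach_density S"
  unfolding upper_banach_density_def
  by (rule cINF_greatest, simp, rule upper_banach_density_sup_nonneg)

lemma upper_banach_density_le:
  assumes "\<And>M N. M + L \<le> N \<Longrightarrow> real (card (S \<inter> {M..N})) / real (N - M + 1) \<le> c"
  shows "upper_banach_density S \<le> c"
  unfolding upper_banach_density_def
proof (rule cINF_lower2)
  show "bdd_below (range (\<lambda>L. SUP p \<in> {(M, N). M + L \<le> N}.
          real (card (S \<inter> {fst p..snd p})) / real (snd p - fst p + 1)))"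
    using upper_banach_density_sup_nonneg by (intro bdd_belowI) blast
  show "(SUP p \<in> {(M, N). M + L \<le> N}.
          real (card (S \<inter> {fst p..snd p})) / real (snd p - fst p + 1)) \<le> c"
    using assms by (intro cSUP_least) auto
qed simp

lemma card_interval_le_sum_blocks:
  fixes S :: "nat set"
  assumes "0 < K"
  shows "card (S \<inter> {M..N}) \<le> (\<Sum>u\<in>{M div K..N div K}. card (S \<inter> {u * K..<u * K + K}))"
proof -
  have "S \<inter> {M..N} \<subseteq> (\<Union>u\<in>{M div K..N div K}. S \<inter> {u * K..<u * K + K})"
  proof
    fix n assume n: "n \<in> S \<inter> {M..N}"
    then have "n div K \<in> {M div K..N div K}"
      by (simp add: div_le_mono)
    moreover have "n \<in> {n div K * K..<n div K * K + K}"
      unfolding atLeastLessThan_iff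
      using div_mult_mod_eq[of n K] mod_less_divisor[OF assms, of n] by linarith
    ultimately show "n \<in> (\<Union>u\<in>{M div K..N div K}. S \<inter> {u * K..<u * K + K})"
      using n by blast
  qed
  then have "card (S \<inter> {M..N}) \<le> card (\<Union>u\<in>{M div K..N div K}. S \<inter> {u * K..<u * K + K})"
    by (rule card_mono[rotated]) simp
  also have "\<dots> \<le> (\<Sum>u\<in>{M div K..N div K}. card (S \<inter> {u * K..<u * K + K}))"
    by (rule card_UN_le) simp
  finally show ?thesis .
qed

lemma card_interval_le_block_bound:
  fixes S :: "nat set"
  assumes "0 < K" and "0 \<le> e" and "M \<le> N"
    and blocks: "\<And>u. 0 < u \<Longrightarrow> real (card (S \<inter> {u * K..<u * K + K})) \<le> e * real K"
  shows "real (card (S \<inter> {M..N})) \<le> e * (real (N - M + 1) + 2 * real K) + real K"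
proof -
  let ?I = "{M div K..N div K}"
  have block_le:
    "real (card (S \<inter> {u * K..<u * K + K})) \<le> e * real K + (if u = 0 then real K else 0)" for u
  proof (cases "u = 0")
    case True
    have "card (S \<inter> {u * K..<u * K + K}) \<le> card {u * K..<u * K + K}"
      by (rule card_mono) auto
    moreover have "0 \<le> e * real K"
      using \<open>0 \<le> e\<close> by simp
    ultimately show ?thesis
      using True by simp
  qed (simp add: blocks)
  have "real (card (S \<inter> {M..N})) \<le> (\<Sum>u\<in>?I. real (card (S \<inter> {u * K..<u * K + K})))"
    using card_interval_le_sum_blocks[OF \<open>0 < K\<close>, of S M N] by (simp flip: of_nat_sum)
  also have "\<dots> \<le> (\<Sum>u\<in>?I. e * real K + (if u = 0 then real K else 0))"
    by (rule sum_mono) (rule block_le)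
  also have "\<dots> \<le> e * (real (card ?I) * K) + K"
    by (simp add: sum.distrib)
  also have "\<dots> \<le> e * (real (N - M + 1) + 2 * real K) + K"
  proof -
    have "N div K * K \<le> N"
      by simp
    then have "real (N div K) * K \<le> N"
      by (simp flip: of_nat_mult)
    have "M < M div K * K + K"
      using div_mult_mod_eq[of M K] mod_less_divisor[OF \<open>0 < K\<close>, of M] by linarith
    then have "real M < real (M div K) * K + K"
      by (simp flip: of_nat_mult of_nat_add)
    moreover have "real (card ?I) = real (N div K) - real (M div K) + 1"
      using div_le_mono[OF \<open>M \<le> N\<close>, of K] by simp
    ultimately have "real (card ?I) * K \<le> real (N - M + 1) + 2 * real K"
      using \<open>real (N div K) * K \<le> N\<close> \<open>M \<le> N\<close> by (simp add: algebra_simps)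
    then show ?thesis
      using \<open>0 \<le> e\<close> by (simp add: mult_left_mono)
  qed
  finally show ?thesis .
qed

lemma upper_banach_density_eq_0I:
  fixes S :: "nat set"
  assumes "\<And>e. 0 < e \<Longrightarrow>
    \<exists>K>0. \<forall>u>0. real (card (S \<inter> {u * K..<u * K + K})) \<le> e * real K"
  shows "upper_banach_density S = 0"
proof -
  have le_2e: "upper_banach_density S \<le> 2 * e" if "0 < e" for e
  proof -
    obtain K where "0 < K"
      and blocks: "\<And>u. 0 < u \<Longrightarrow> real (card (S \<inter> {u * K..<u * K + K})) \<le> e * real K"
      using assms[OF \<open>0 < e\<close>] by blast
    obtain L :: nat where L: "(2 * e * real K + real K) / e \<le> L"
      using real_arch_simple by blast
    have "real (card (S \<inter> {M..N})) / real (N - M + 1) \<le> 2 * e" if "M + L \<le> N" for M N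
    proof -
      have "(2 * e * real K + real K) / e \<le> real (N - M + 1)"
        using L that by simp
      then have "e * (2 * real K) + K \<le> e * real (N - M + 1)"
        using \<open>0 < e\<close> by (simp add: divide_le_eq algebra_simps)
      then have "real (card (S \<inter> {M..N})) \<le> 2 * e * real (N - M + 1)"
        using card_interval_le_block_bound[OF \<open>0 < K\<close> _ _ blocks, of M N] \<open>0 < e\<close> that
        by (simp add: algebra_simps)
      then show ?thesis
        by (simp add: divide_le_eq)
    qed
    then show ?thesis
      by (rule upper_banach_density_le)
  qed
  have "upper_banach_density S \<le> 0 + e" if "0 < e" for e
    using le_2e[of "e / 2"] that by simp
  then have "upper_banach_density S \<le> 0"
    by (rule field_le_epsilon)
  then show ?thesis
    using upper_banach_density_nonneg[of S] by simp
qed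

lemma density_0_uniform_block_bound:
  fixes S :: "nat set" and s :: "nat \<Rightarrow> 'q"
  assumes "k \<ge> 2" and "finite (range s)" and "has_density S 0" and "0 < e"
    and same_state: "\<And>u v j m. 0 < u \<Longrightarrow> 0 < v \<Longrightarrow> s u = s v \<Longrightarrow> m < k ^ j \<Longrightarrow>
           u * k ^ j + m \<in> S \<longleftrightarrow> v * k ^ j + m \<in> S"
  shows "\<exists>K>0. \<forall>u>0. real (card (S \<inter> {u * K..<u * K + K})) \<le> e * real K"
proof -
  define freq where "freq u K = real (card (S \<inter> {u * K..<u * K + K})) / real K" for u K
  have same_freq: "freq u (k ^ j) = freq v (k ^ j)" if "0 < u" "0 < v" "s u = s v" for u v j
  proof -
    have "{m. m < k ^ j \<and> u * k ^ j + m \<in> S} = {m. m < k ^ j \<and> v * k ^ j + m \<in> S}"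
      using same_state[OF that] by blast
    then show ?thesis
      by (simp only: freq_def card_Int_block)
  qed
  have "strict_mono (\<lambda>j. k ^ j)"
    using \<open>k \<ge> 2\<close> by (intro strict_monoI) simp
  then have pow_at_top: "filterlim (\<lambda>j. k ^ j) at_top sequentially"
    by (rule filterlim_subseq)
  have "\<forall>q\<in>s ` {0<..}. \<forall>\<^sub>F j in sequentially. \<forall>u>0. s u = q \<longrightarrow> freq u (k ^ j) < e"
  proof
    fix q assume "q \<in> s ` {0<..}"
    then obtain u0 where "0 < u0" and "s u0 = q"
      by auto
    have "(\<lambda>j. freq u0 (k ^ j)) \<longlonglongrightarrow> 0"
      unfolding freq_def
      by (rule filterlim_compose[OF block_frequency_tendsto_0[OF \<open>has_density S 0\<close>] pow_at_top])
    then have "\<forall>\<^sub>F j in sequentially. freq u0 (k ^ j) < e"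
      using \<open>0 < e\<close> by (rule order_tendstoD)
    then show "\<forall>\<^sub>F j in sequentially. \<forall>u>0. s u = q \<longrightarrow> freq u (k ^ j) < e"
      by (rule eventually_mono) (use same_freq[OF _ \<open>0 < u0\<close>] \<open>s u0 = q\<close> in auto)
  qed
  moreover have "finite (s ` {0<..})"
    using \<open>finite (range s)\<close> by (rule finite_subset[rotated]) blast
  ultimately have "\<forall>\<^sub>F j in sequentially. \<forall>q\<in>s ` {0<..}. \<forall>u>0. s u = q \<longrightarrow> freq u (k ^ j) < e"
    by (rule eventually_ball_finite[rotated])
  then obtain j where "\<forall>u>0. freq u (k ^ j) < e"
    using eventually_happens'[OF trivial_limit_sequentially] by blast
  moreover have "0 < k ^ j"
    using \<open>k \<ge> 2\<close> by simp
  ultimately have "real (card (S \<inter> {u * k ^ j..<u * k ^ j + k ^ j})) \<le> e * real (k ^ j)"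
    if "0 < u" for u
    using that by (intro less_imp_le) (simp add: freq_def pos_divide_less_eq)
  with \<open>0 < k ^ j\<close> show ?thesis
    by (intro exI[of _ "k ^ j"]) simp
qed

theorem lemma3p7:
  fixes a :: "nat \<Rightarrow> 'b" and \<alpha> :: 'b
  assumes "automatic a"
    and "has_density {n. a n = \<alpha>} 0"
  shows "upper_banach_density {n. a n = \<alpha>} = 0"
proof (rule upper_banach_density_eq_0I)
  obtain k and s :: "nat \<Rightarrow> nat" where "k \<ge> 2" and "finite (range s)"
    and same_state: "\<And>u v j m. 0 < u \<Longrightarrow> 0 < v \<Longrightarrow> s u = s v \<Longrightarrow> m < k ^ j \<Longrightarrow>
           a (u * k ^ j + m) = a (v * k ^ j + m)"
    using automatic_block_determined_by_state[OF assms(1)] by metis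
  fix e :: real
  assume "0 < e"
  show "\<exists>K>0. \<forall>u>0. real (card ({n. a n = \<alpha>} \<inter> {u * K..<u * K + K})) \<le> e * real K"
  proof (rule density_0_uniform_block_bound[OF \<open>k \<ge> 2\<close> \<open>finite (range s)\<close> assms(2) \<open>0 < e\<close>])
    fix u v j m :: nat
    assume "0 < u" "0 < v" "s u = s v" "m < k ^ j"
    then have "a (u * k ^ j + m) = a (v * k ^ j + m)"
      by (rule same_state)
    then show "u * k ^ j + m \<in> {n. a n = \<alpha>} \<longleftrightarrow> v * k ^ j + m \<in> {n. a n = \<alpha>}"
      by simp
  qed
qed

end
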